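(* Let $c\ge 20000$, and suppose $n\ge c$ and $m\ge n+2c$. With $\pi$ uniformly random from $\Pi_{n,m,c}$, $\Pr[\pi\in\mathcal{E}_1]\ge\Pr[\pi\in\mathcal{E}_2]$.
   Context: Integers $m,n,c$; $N=m+n+2c$. $\Pi_{n,m,c}$ is the set of maps $\pi:[N]\to\{\mathrm{BO},\mathrm{BN},\mathrm{SO},\mathrm{SN}\}$ with exactly $m$ indices mapped to $\mathrm{BO}$, $c$ to $\mathrm{BN}$, $n$ to $\mathrm{SO}$ and $c$ to $\mathrm{SN}$; write $B_{\mathrm{Old}}^\pi,B_{\mathrm{New}}^\pi,S_{\mathrm{Old}}^\pi,S_{\mathrm{New}}^\pi$ for these preimages. Let $p=\lceil n/10\rceil$, $I_1=\{1,\dots,p\}$, $I_2=\{p+1,\dots,2p\}$, $J_1=\{N-p+1,\dots,N\}$, $J_2=\{N-2p+1,\dots,N-p\}$. $\mathcal{E}_1$ is the set of $\pi\in\Pi_{n,m,c}$ with $|I_1\cap B_{\mathrm{New}}^\pi|\ge2$, $|I_2\cap B_{\mathrm{Old}}^\pi|\ge1$, $|J_1\cap S_{\mathrm{New}}^\pi|\ge2$, $|J_2\cap S_{\mathrm{Old}}^\pi|\ge1$. $\mathcal{E}_2=\{\pi\in\Pi_{n,m,c}:\pi\notin\mathcal{E}_1,\ S_{\mathrm{New}}^\pi\subseteq\{1,\dots,2n+2c\}\}$. *)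

theory Defs
  imports "HOL-Probability.Probability"
begin

datatype role = BO | BN | SO | SN

definition NN :: "nat \<Rightarrow> nat \<Rightarrow> nat \<Rightarrow> nat" where
  "NN n m c = m + n + 2 * c"

definition PiSet :: "nat \<Rightarrow> nat \<Rightarrow> nat \<Rightarrow> (nat \<Rightarrow> role) set" where
  "PiSet n m c = {\<pi> \<in> {1..NN n m c} \<rightarrow>\<^sub>E UNIV.
      card {i \<in> {1..NN n m c}. \<pi> i = BO} = m \<and>
      card {i \<in> {1..NN n m c}. \<pi> i = BN} = c \<and>
      card {i \<in> {1..NN n m c}. \<pi> i = SO} = n \<and>
      card {i \<in> {1..NN n m c}. \<pi> i = SN} = c}"

definition pp :: "nat \<Rightarrow> nat" where
  "pp n = nat \<lceil>real n / 10\<rceil>"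

definition E1 :: "nat \<Rightarrow> nat \<Rightarrow> nat \<Rightarrow> (nat \<Rightarrow> role) set" where
  "E1 n m c = (let N = NN n m c; p = pp n in
     {\<pi> \<in> PiSet n m c.
        card ({1..p} \<inter> {i. \<pi> i = BN}) \<ge> 2 \<and>
        card ({p+1..2*p} \<inter> {i. \<pi> i = BO}) \<ge> 1 \<and>
        card ({N-p+1..N} \<inter> {i. \<pi> i = SN}) \<ge> 2 \<and>
        card ({N-2*p+1..N-p} \<inter> {i. \<pi> i = SO}) \<ge> 1})"

definition E2 :: "nat \<Rightarrow> nat \<Rightarrow> nat \<Rightarrow> (nat \<Rightarrow> role) set" where
  "E2 n m c = {\<pi> \<in> PiSet n m c. \<pi> \<notin> E1 n m c \<and>
      {i \<in> {1..NN n m c}. \<pi> i = SN} \<subseteq> {1..2*n+2*c}}"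

end

theory Submission
  imports Defs
begin

text \<open>
  Write \<open>S(m)\<close> for \<open>PiSet n m c\<close>, \<open>N = m + n + 2c\<close> and \<open>p = \<lceil>n/10\<rceil>\<close>. Both events lie in
  \<open>S(m)\<close>, so it suffices to show \<open>|E2| \<le> |E1|\<close>.

  If \<open>m \<le> 3n + 2c\<close>, every window of \<open>E1\<close> has length \<open>p \<ge> N/80\<close> and every role occurs at least
  \<open>c \<ge> 20000\<close> times. Swapping one occurrence of a role into a window relates the maps with \<open>j\<close>
  and with \<open>j + 1\<close> occurrences there, so a window contains fewer than two occurrences with
  probability at most \<open>1/50\<close>. Hence \<open>|S(m)| \<le> 2 |E1(m)|\<close>, while \<open>E2 \<subseteq> S(m) - E1(m)\<close>.

  If \<open>m > 3n + 2c\<close>, then \<open>E2\<close> is contained in \<open>A(m) = SN_upto L n m c\<close>, the set of maps whose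
  \<open>SN\<close> entries all lie in \<open>{1..L}\<close>, where \<open>L = 2n + 2c\<close>. For \<open>m = 3n + 2c\<close> we have \<open>N = 2L\<close>
  and \<open>|A(m)| \<le> |S(m)|/c\<close>, and we induct on \<open>m\<close>. Inserting a \<open>BO\<close> at position \<open>j\<close> maps \<open>S(m)\<close> into \<open>S(m + 1)\<close>, and every
  \<open>\<sigma> \<in> S(m + 1)\<close> arises from exactly \<open>m + 1\<close> pairs \<open>(\<pi>, j)\<close>. Counting such pairs gives
  \<open>|A(m + 1)| (m + 1) \<le> |A(m)| (N + 1 - c)\<close>: an insertion at \<open>j \<le> L\<close> leaves \<open>A\<close> iff \<open>\<pi> L = SN\<close>,
  which by symmetry holds for a fraction \<open>c/L\<close> of \<open>A(m)\<close>. It also gives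
  \<open>|E1(m)| (N + 1 - c) \<le> |E1(m + 1)| (m + 1)\<close>: an insertion preserves \<open>E1\<close> unless the map is
  fragile at one end, which by symmetry happens for a fraction at most \<open>3/p\<close> at each end and
  then costs at most \<open>2p\<close> positions.
\<close>

section \<open>Symmetrization by transpositions\<close>

lemma card_comp_bij_betw:
  assumes "bij_betw f A B"
  shows "card {i\<in>A. (\<pi> \<circ> f) i = x} = card {i\<in>B. \<pi> i = x}"
proof (rule bij_betw_same_card)
  show "bij_betw f {i\<in>A. (\<pi> \<circ> f) i = x} {i\<in>B. \<pi> i = x}"
    using assms by (auto simp: bij_betw_def inj_on_def)
qed

lemma card_comp_transpose:
  assumes "a \<in> A \<longleftrightarrow> b \<in> A"
  shows "card {i\<in>A. (\<pi> \<circ> Transposition.transpose a b) i = x} = card {i\<in>A. \<pi> i = x}"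
  using assms by (intro card_comp_bij_betw) simp

lemma bij_betw_transpose_Diff:
  assumes "a \<in> V" "b \<in> V"
  shows "bij_betw (Transposition.transpose a b) (V - {b}) (V - {a})"
proof (rule bij_betw_imageI)
  show "Transposition.transpose a b ` (V - {b}) = V - {a}"
    using assms by (simp add: image_set_diff[OF inj_transpose])
qed simp

lemma sum_card_eq_by_transpose_symmetry:
  fixes S :: "('i \<Rightarrow> 'a) set"
  assumes "finite S" "finite V" "k0 \<in> V"
    and closed: "\<And>k \<pi>. k \<in> V \<Longrightarrow> \<pi> \<in> S \<Longrightarrow> \<pi> \<circ> Transposition.transpose k k0 \<in> S"
    and invariant: "\<And>k \<pi>. k \<in> V \<Longrightarrow> \<pi> \<in> S \<Longrightarrow>
                      P (\<pi> \<circ> Transposition.transpose k k0) k0 \<longleftrightarrow> P \<pi> k"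
  shows "(\<Sum>\<pi>\<in>S. card {k\<in>V. P \<pi> k}) = card {\<pi>\<in>S. P \<pi> k0} * card V"
proof (rule sum_multicount[OF assms(1,2)], intro ballI)
  fix k assume k: "k \<in> V"
  let ?\<tau> = "Transposition.transpose k k0"
  show "card {\<pi>\<in>S. P \<pi> k} = card {\<pi>\<in>S. P \<pi> k0}"
  proof (rule bij_betw_same_card[of "\<lambda>\<pi>. \<pi> \<circ> ?\<tau>"], rule bij_betw_byWitness)
    show "\<forall>\<pi>\<in>{\<pi>\<in>S. P \<pi> k}. \<pi> \<circ> ?\<tau> \<circ> ?\<tau> = \<pi>" "\<forall>\<pi>\<in>{\<pi>\<in>S. P \<pi> k0}. \<pi> \<circ> ?\<tau> \<circ> ?\<tau> = \<pi>"
      by (simp_all add: comp_assoc)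
    show "(\<lambda>\<pi>. \<pi> \<circ> ?\<tau>) ` {\<pi>\<in>S. P \<pi> k} \<subseteq> {\<pi>\<in>S. P \<pi> k0}"
      using k closed invariant by auto
    show "(\<lambda>\<pi>. \<pi> \<circ> ?\<tau>) ` {\<pi>\<in>S. P \<pi> k0} \<subseteq> {\<pi>\<in>S. P \<pi> k}"
      using k closed invariant[OF k closed[OF k]] by (auto simp: comp_assoc)
  qed
qed

lemma card_fragile_positions_le:
  fixes \<pi> :: "'i \<Rightarrow> 'a"
  assumes "finite V" "r \<le> card {i\<in>V. \<pi> i = X}"
  shows "card {k\<in>V. card {i\<in>V - {k}. \<pi> i = X} < r} \<le> r"
proof (cases "{k\<in>V. card {i\<in>V - {k}. \<pi> i = X} < r} = {}")
  case True
  then show ?thesis by (metis card.empty zero_le)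
next
  case False
  then obtain k where k: "k \<in> V" "card {i\<in>V - {k}. \<pi> i = X} < r" by blast
  have sub: "{k\<in>V. card {i\<in>V - {k}. \<pi> i = X} < r} \<subseteq> {i\<in>V. \<pi> i = X}"
  proof clarify
    fix k' assume "k' \<in> V" "card {i\<in>V - {k'}. \<pi> i = X} < r"
    moreover have "{i\<in>V - {k'}. \<pi> i = X} = {i\<in>V. \<pi> i = X}" if "\<pi> k' \<noteq> X" using that by auto
    ultimately show "\<pi> k' = X" using assms(2) by fastforce
  qed
  with k have "{i\<in>V. \<pi> i = X} = insert k {i\<in>V - {k}. \<pi> i = X}" by auto
  then have "card {i\<in>V. \<pi> i = X} \<le> r" using k assms(1) by simp
  moreover have "card {k\<in>V. card {i\<in>V - {k}. \<pi> i = X} < r} \<le> card {i\<in>V. \<pi> i = X}"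
    using assms(1) sub by (intro card_mono) auto
  ultimately show ?thesis by linarith
qed

lemma card_mult_card_fragile_le:
  fixes S :: "('i \<Rightarrow> 'a) set"
  assumes "finite S" "finite V" "k0 \<in> V"
    and closed: "\<And>k \<pi>. k \<in> V \<Longrightarrow> \<pi> \<in> S \<Longrightarrow> \<pi> \<circ> Transposition.transpose k k0 \<in> S"
    and many: "\<And>\<pi>. \<pi> \<in> S \<Longrightarrow> r \<le> card {i\<in>V. \<pi> i = X}"
  shows "card V * card {\<pi>\<in>S. card {i\<in>V - {k0}. \<pi> i = X} < r} \<le> r * card S"
proof -
  have "card {\<pi>\<in>S. card {i\<in>V - {k0}. \<pi> i = X} < r} * card V
        = (\<Sum>\<pi>\<in>S. card {k\<in>V. card {i\<in>V - {k}. \<pi> i = X} < r})"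
  proof (rule sum_card_eq_by_transpose_symmetry[symmetric, OF assms(1-3) closed])
    fix k \<pi> assume "k \<in> V"
    then show "card {i\<in>V - {k0}. (\<pi> \<circ> Transposition.transpose k k0) i = X} < r
               \<longleftrightarrow> card {i\<in>V - {k}. \<pi> i = X} < r"
      using assms(3) by (simp only: card_comp_bij_betw[OF bij_betw_transpose_Diff])
  qed
  also have "\<dots> \<le> (\<Sum>\<pi>\<in>S. r)"
    using card_fragile_positions_le[OF assms(2) many] by (intro sum_mono)
  finally show ?thesis by (simp add: mult.commute)
qed

lemma card_swap_pairs:
  assumes "finite U" "R \<subseteq> U" "card {i\<in>R. \<pi> i = x} = j" "card {i\<in>U. \<pi> i = x} = k"
  shows "card ({a\<in>R. \<pi> a \<noteq> x} \<times> {b\<in>U - R. \<pi> b = x}) = (card R - j) * (k - j)"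
proof -
  have finR: "finite R" using assms(1,2) by (rule finite_subset[rotated])
  have "{a\<in>R. \<pi> a \<noteq> x} = R - {i\<in>R. \<pi> i = x}" by auto
  then have "card {a\<in>R. \<pi> a \<noteq> x} = card R - j"
    using assms(3) finR by (simp add: card_Diff_subset)
  moreover have "{b\<in>U - R. \<pi> b = x} = {i\<in>U. \<pi> i = x} - {i\<in>R. \<pi> i = x}"
    using assms(2) by auto
  then have "card {b\<in>U - R. \<pi> b = x} = k - j"
    using assms(2-4) finR by (simp add: card_Diff_subset subset_eq)
  ultimately show ?thesis by (simp add: card_cartesian_product)
qed

text \<open>
  Double counting of the triples \<open>(\<pi>, a, b)\<close> with \<open>a \<in> R\<close>, \<open>b \<in> U - R\<close>, \<open>\<pi> a \<noteq> x = \<pi> b\<close>: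
  swapping \<open>a\<close> and \<open>b\<close> raises the number of \<open>x\<close> in \<open>R\<close> from \<open>j\<close> to \<open>j + 1\<close>.
\<close>

lemma hypergeometric_ratio_le:
  fixes S :: "('i \<Rightarrow> 'a) set"
  assumes "finite S" "finite U" "R \<subseteq> U"
    and closed: "\<And>\<pi> a b. \<pi> \<in> S \<Longrightarrow> a \<in> U \<Longrightarrow> b \<in> U \<Longrightarrow> \<pi> \<circ> Transposition.transpose a b \<in> S"
    and total: "\<And>\<pi>. \<pi> \<in> S \<Longrightarrow> card {i\<in>U. \<pi> i = x} = k"
  shows "card {\<pi>\<in>S. card {i\<in>R. \<pi> i = x} = j} * ((card R - j) * (k - j))
       \<le> card {\<pi>\<in>S. card {i\<in>R. \<pi> i = x} = Suc j} * (Suc j * card (U - R))"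
proof -
  define X where "X l = {\<pi>\<in>S. card {i\<in>R. \<pi> i = x} = l}" for l
  define P where "P = (SIGMA \<pi>:X j. {a\<in>R. \<pi> a \<noteq> x} \<times> {b\<in>U - R. \<pi> b = x})"
  define Q where "Q = (SIGMA \<sigma>:X (Suc j). {a\<in>R. \<sigma> a = x} \<times> (U - R))"
  define f :: "('i \<Rightarrow> 'a) \<times> 'i \<times> 'i \<Rightarrow> _"
    where "f = (\<lambda>(\<pi>, a, b). (\<pi> \<circ> Transposition.transpose a b, a, b))"
  have finR: "finite R" using assms(2,3) by (rule finite_subset[rotated])
  have "card P = card (X j) * ((card R - j) * (k - j))"
    using assms(1,2) finR card_swap_pairs[OF assms(2,3) _ total] unfolding P_def X_def
    by (subst card_SigmaI) auto
  moreover have "card Q = card (X (Suc j)) * (Suc j * card (U - R))"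
    using assms(1,2) finR unfolding Q_def X_def
    by (subst card_SigmaI) (auto simp: card_cartesian_product)
  moreover have "card P \<le> card Q"
  proof (rule card_inj_on_le)
    show "inj_on f P"
      by (rule inj_onI) (clarsimp simp: f_def, metis comp_assoc comp_id transpose_comp_involutory)
    show "f ` P \<subseteq> Q"
    proof (rule image_subsetI)
      fix t assume "t \<in> P"
      then obtain \<pi> a b where t: "t = (\<pi>, a, b)" and "(\<pi>, a, b) \<in> P" by (cases t) auto
      then have \<pi>: "\<pi> \<in> S" "card {i\<in>R. \<pi> i = x} = j"
        and ab: "a \<in> R" "\<pi> a \<noteq> x" "b \<in> U" "b \<notin> R" "\<pi> b = x" by (auto simp: P_def X_def)
      have "{i\<in>R. (\<pi> \<circ> Transposition.transpose a b) i = x} = insert a {i\<in>R. \<pi> i = x}"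
        using ab by (auto simp: Transposition.transpose_def)
      then have "card {i\<in>R. (\<pi> \<circ> Transposition.transpose a b) i = x} = Suc j"
        using \<pi> ab finR by simp
      then show "f t \<in> Q"
        using \<pi> ab assms(3) closed by (auto simp: t f_def Q_def X_def)
    qed
    show "finite Q" using assms(1,2) finR unfolding Q_def X_def by (intro finite_SigmaI) auto
  qed
  ultimately show ?thesis unfolding X_def by simp
qed

section \<open>Inserting an entry\<close>

definition insert_at :: "(nat \<Rightarrow> 'a) \<Rightarrow> nat \<Rightarrow> 'a \<Rightarrow> nat \<Rightarrow> 'a" where
  "insert_at \<pi> j x i = (if i < j then \<pi> i else if i = j then x else \<pi> (i - 1))"

definition delete_at :: "(nat \<Rightarrow> 'a) \<Rightarrow> nat \<Rightarrow> nat \<Rightarrow> 'a" where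
  "delete_at \<sigma> j i = (if i < j then \<sigma> i else \<sigma> (Suc i))"

definition skip :: "nat \<Rightarrow> nat \<Rightarrow> nat" where
  "skip j i = (if i < j then i else Suc i)"

lemma insert_at_skip [simp]: "insert_at \<pi> j x (skip j i) = \<pi> i"
  by (simp add: insert_at_def skip_def)

lemma insert_at_same [simp]: "insert_at \<pi> j x j = x"
  by (simp add: insert_at_def)

lemma inj_skip: "inj (skip j)"
  by (rule injI) (auto simp: skip_def split: if_splits)

lemma delete_at_insert_at [simp]: "delete_at (insert_at \<pi> j x) j = \<pi>"
  by (rule ext) (simp add: delete_at_def insert_at_def)

lemma insert_at_delete_at: "\<sigma> j = x \<Longrightarrow> insert_at (delete_at \<sigma> j) j x = \<sigma>"
  by (rule ext) (auto simp: delete_at_def insert_at_def)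

lemma le_card_insert_at:
  assumes "r \<le> card {i\<in>A. \<pi> i = y}" "finite B" "skip j ` A \<subseteq> B"
  shows "r \<le> card {i\<in>B. insert_at \<pi> j x i = y}"
proof -
  have "card {i\<in>A. \<pi> i = y} \<le> card {i\<in>B. insert_at \<pi> j x i = y}"
  proof (rule card_inj_on_le)
    show "inj_on (skip j) {i\<in>A. \<pi> i = y}" using inj_skip by (rule inj_on_subset) simp
    show "skip j ` {i\<in>A. \<pi> i = y} \<subseteq> {i\<in>B. insert_at \<pi> j x i = y}" using assms(3) by auto
  qed (use assms(2) in simp)
  then show ?thesis using assms(1) by linarith
qed

lemma card_insert_at:
  assumes "1 \<le> j" "j \<le> Suc N"
  shows "card {i\<in>{1..Suc N}. insert_at \<pi> j x i = y}
           = card {i\<in>{1..N}. \<pi> i = y} + (if x = y then 1 else 0)"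
proof -
  have "{1..Suc N} = insert j (skip j ` {1..N})"
  proof (intro equalityI subsetI)
    fix i assume i: "i \<in> {1..Suc N}"
    show "i \<in> insert j (skip j ` {1..N})"
    proof (cases "i < j")
      case True
      then show ?thesis using i assms by (intro insertI2 image_eqI[of _ _ i]) (auto simp: skip_def)
    next
      case False
      then show ?thesis
        using i assms by (cases "i = j") (auto simp: skip_def image_iff intro!: bexI[of _ "i - 1"])
    qed
  qed (use assms in \<open>auto simp: skip_def\<close>)
  then have "{i\<in>{1..Suc N}. insert_at \<pi> j x i = y}
      = {i\<in>{j}. x = y} \<union> skip j ` {i\<in>{1..N}. \<pi> i = y}"
    by auto
  moreover have "card ({i\<in>{j}. x = y} \<union> skip j ` {i\<in>{1..N}. \<pi> i = y})
      = card {i\<in>{j}. x = y} + card (skip j ` {i\<in>{1..N}. \<pi> i = y})"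
    by (rule card_Un_disjoint) (auto simp: skip_def)
  moreover have "card (skip j ` {i\<in>{1..N}. \<pi> i = y}) = card {i\<in>{1..N}. \<pi> i = y}"
    by (intro card_image inj_on_subset[OF inj_skip subset_UNIV])
  ultimately show ?thesis by simp
qed

lemma sum_card_insert_at_eq:
  assumes "finite S" "finite T" "finite J"
  shows "(\<Sum>\<pi>\<in>S. card {j\<in>J. insert_at \<pi> j x \<in> T})
       = (\<Sum>\<sigma>\<in>T. card {j\<in>J. \<sigma> j = x \<and> delete_at \<sigma> j \<in> S})"
proof -
  have "card {\<pi>\<in>S. insert_at \<pi> j x \<in> T} = card {\<sigma>\<in>T. \<sigma> j = x \<and> delete_at \<sigma> j \<in> S}" for j
    by (rule bij_betw_same_card[OF bij_betw_byWitness[where f = "\<lambda>\<pi>. insert_at \<pi> j x"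
                                                       and f' = "\<lambda>\<sigma>. delete_at \<sigma> j"]])
      (auto simp: insert_at_delete_at)
  then have "(\<Sum>j\<in>J. card {\<pi>\<in>S. insert_at \<pi> j x \<in> T})
      = (\<Sum>j\<in>J. card {\<sigma>\<in>T. \<sigma> j = x \<and> delete_at \<sigma> j \<in> S})" by simp
  moreover have "(\<Sum>\<pi>\<in>S. card {j\<in>J. insert_at \<pi> j x \<in> T}) = (\<Sum>j\<in>J. card {\<pi>\<in>S. insert_at \<pi> j x \<in> T})"
    by (rule sum_multicount_gen[OF assms(1,3)]) simp
  moreover have "(\<Sum>\<sigma>\<in>T. card {j\<in>J. \<sigma> j = x \<and> delete_at \<sigma> j \<in> S})
      = (\<Sum>j\<in>J. card {\<sigma>\<in>T. \<sigma> j = x \<and> delete_at \<sigma> j \<in> S})"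
    by (rule sum_multicount_gen[OF assms(2,3)]) simp
  ultimately show ?thesis by simp
qed

section \<open>Maps with prescribed role counts\<close>

lemma finite_PiSet: "finite (PiSet n m c)"
proof (rule finite_subset)
  show "PiSet n m c \<subseteq> {1..NN n m c} \<rightarrow>\<^sub>E (UNIV :: role set)" by (auto simp: PiSet_def)
  have "(UNIV :: role set) = {BO, BN, SO, SN}" using role.exhaust by auto
  then have "finite (UNIV :: role set)" by (metis finite.emptyI finite_insert)
  then show "finite ({1..NN n m c} \<rightarrow>\<^sub>E (UNIV :: role set))" by (intro finite_PiE) auto
qed

lemma NN_Suc: "NN n (Suc m) c = Suc (NN n m c)"
  by (simp add: NN_def)

lemma PiSet_iff: "\<pi> \<in> PiSet n m c \<longleftrightarrow>
   (\<forall>i. i \<notin> {1..NN n m c} \<longrightarrow> \<pi> i = undefined) \<and>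
      card {i \<in> {1..NN n m c}. \<pi> i = BO} = m \<and>
      card {i \<in> {1..NN n m c}. \<pi> i = BN} = c \<and>
      card {i \<in> {1..NN n m c}. \<pi> i = SO} = n \<and>
      card {i \<in> {1..NN n m c}. \<pi> i = SN} = c"
  by (auto simp: PiSet_def PiE_def extensional_def)

lemma card_PiSet_role:
  assumes "\<pi> \<in> PiSet n m c"
  shows "card {i\<in>{1..NN n m c}. \<pi> i = x} = (case x of BO \<Rightarrow> m | BN \<Rightarrow> c | SO \<Rightarrow> n | SN \<Rightarrow> c)"
  using assms by (cases x) (simp_all add: PiSet_iff)

lemma PiSet_transpose:
  assumes "\<pi> \<in> PiSet n m c" "a \<in> {1..NN n m c}" "b \<in> {1..NN n m c}"
  shows "\<pi> \<circ> Transposition.transpose a b \<in> PiSet n m c"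
proof -
  have ab: "a \<in> {1..NN n m c} \<longleftrightarrow> b \<in> {1..NN n m c}" using assms by simp
  show ?thesis
    using assms unfolding PiSet_iff card_comp_transpose[OF ab] by auto
qed

lemma insert_at_PiSet:
  assumes "\<pi> \<in> PiSet n m c" "1 \<le> j" "j \<le> Suc (NN n m c)"
  shows "insert_at \<pi> j BO \<in> PiSet n (Suc m) c"
proof -
  have out: "\<pi> i = undefined" if "i \<notin> {1..NN n m c}" for i
    using assms(1) that by (simp add: PiSet_iff)
  have "insert_at \<pi> j BO i = undefined" if "i \<notin> {1..Suc (NN n m c)}" for i
    using assms(2,3) that by (auto simp: insert_at_def intro!: out)
  then show ?thesis
    using assms(1) unfolding PiSet_iff NN_Suc card_insert_at[OF assms(2,3)] by simp
qed

lemma delete_at_PiSet: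
  assumes "\<sigma> \<in> PiSet n (Suc m) c" "1 \<le> j" "j \<le> Suc (NN n m c)" "\<sigma> j = BO"
  shows "delete_at \<sigma> j \<in> PiSet n m c"
proof -
  have counts: "card {i\<in>{1..Suc (NN n m c)}. \<sigma> i = y}
      = card {i\<in>{1..NN n m c}. delete_at \<sigma> j i = y} + (if BO = y then 1 else 0)" for y
    using card_insert_at[OF assms(2,3), of "delete_at \<sigma> j" BO y]
    by (simp add: insert_at_delete_at assms(4))
  have out: "\<sigma> i = undefined" if "i \<notin> {1..Suc (NN n m c)}" for i
    using assms(1) that by (simp add: PiSet_iff NN_Suc)
  have "delete_at \<sigma> j i = undefined" if "i \<notin> {1..NN n m c}" for i
    using assms(2,3) that by (auto simp: delete_at_def intro!: out)
  then show ?thesis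
    using assms(1) counts unfolding PiSet_iff NN_Suc by simp
qed

section \<open>Stability of E1 under insertion\<close>

definition E1_cond :: "nat \<Rightarrow> nat \<Rightarrow> (nat \<Rightarrow> role) \<Rightarrow> bool" where
  "E1_cond N p \<pi> \<longleftrightarrow>
     2 \<le> card {i\<in>{1..p}. \<pi> i = BN} \<and> 1 \<le> card {i\<in>{p+1..2*p}. \<pi> i = BO} \<and>
     2 \<le> card {i\<in>{N-p+1..N}. \<pi> i = SN} \<and> 1 \<le> card {i\<in>{N-2*p+1..N-p}. \<pi> i = SO}"

lemma E1_iff: "\<pi> \<in> E1 n m c \<longleftrightarrow> \<pi> \<in> PiSet n m c \<and> E1_cond (NN n m c) (pp n) \<pi>"
proof -
  have "A \<inter> {i. \<pi> i = X} = {i\<in>A. \<pi> i = X}" for A X by blast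
  then show ?thesis unfolding E1_def E1_cond_def Let_def by auto
qed

lemma E1_subset_PiSet: "E1 n m c \<subseteq> PiSet n m c"
  by (auto simp: E1_iff)

lemma finite_E1: "finite (E1 n m c)"
  using finite_PiSet E1_subset_PiSet by (rule finite_subset[rotated])

lemma E1_transpose:
  assumes "\<pi> \<in> E1 n m c" "4 * pp n \<le> NN n m c" "a \<in> V" "b \<in> V"
    and "V \<in> {{1..pp n}, {pp n+1..2*pp n}, {NN n m c-pp n+1..NN n m c},
              {NN n m c-2*pp n+1..NN n m c-pp n}}"
  shows "\<pi> \<circ> Transposition.transpose a b \<in> E1 n m c"
proof -
  define N p where "N = NN n m c" and "p = pp n"
  have V: "V \<in> {{1..p}, {p+1..2*p}, {N-p+1..N}, {N-2*p+1..N-p}}" "4 * p \<le> N"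
    using assms(2,5) unfolding N_def p_def by auto
  have ab: "a \<in> {1..N}" "b \<in> {1..N}" using V assms(3,4) by auto
  have w: "a \<in> {1..p} \<longleftrightarrow> b \<in> {1..p}" "a \<in> {p+1..2*p} \<longleftrightarrow> b \<in> {p+1..2*p}"
    "a \<in> {N-p+1..N} \<longleftrightarrow> b \<in> {N-p+1..N}" "a \<in> {N-2*p+1..N-p} \<longleftrightarrow> b \<in> {N-2*p+1..N-p}"
    using V assms(3,4) by auto
  have "E1_cond N p (\<pi> \<circ> Transposition.transpose a b) = E1_cond N p \<pi>"
    unfolding E1_cond_def card_comp_transpose[OF w(1)] card_comp_transpose[OF w(2)]
      card_comp_transpose[OF w(3)] card_comp_transpose[OF w(4)] ..
  then show ?thesis
    using assms(1) PiSet_transpose[OF _ ab[unfolded N_def]] unfolding E1_iff N_def p_def by auto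
qed

text \<open>
  Inserting an entry at position \<open>j\<close> shifts the entries at positions \<open>\<ge> j\<close> one place to the
  right. A window at the left end of \<open>{1..N}\<close> can thereby lose its last entry, and a window at
  the right end, which moves along with \<open>N\<close>, its first entry. A map is fragile if such a loss can
  break the condition of \<open>E1\<close>.
\<close>

definition left_fragile :: "nat \<Rightarrow> (nat \<Rightarrow> role) \<Rightarrow> bool" where
  "left_fragile p \<pi> \<longleftrightarrow>
     card {i\<in>{1..p} - {p}. \<pi> i = BN} < 2 \<or> card {i\<in>{p+1..2*p} - {2*p}. \<pi> i = BO} < 1"

definition right_fragile :: "nat \<Rightarrow> nat \<Rightarrow> (nat \<Rightarrow> role) \<Rightarrow> bool" where
  "right_fragile N p \<pi> \<longleftrightarrow>
     card {i\<in>{N-p+1..N} - {N-p+1}. \<pi> i = SN} < 2 \<or>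
     card {i\<in>{N-2*p+1..N-p} - {N-2*p+1}. \<pi> i = SO} < 1"

lemma left_windows_insert_at:
  assumes "E1_cond N p \<pi>" "left_fragile p \<pi> \<Longrightarrow> 2 * p < j"
  shows "2 \<le> card {i\<in>{1..p}. insert_at \<pi> j BO i = BN}"
    and "1 \<le> card {i\<in>{p+1..2*p}. insert_at \<pi> j BO i = BO}"
proof -
  obtain A B where A: "2 \<le> card {i\<in>A. \<pi> i = BN}" "skip j ` A \<subseteq> {1..p}"
    and B: "1 \<le> card {i\<in>B. \<pi> i = BO}" "skip j ` B \<subseteq> {p+1..2*p}"
  proof (cases "left_fragile p \<pi>")
    case True
    then have "skip j ` {1..p} \<subseteq> {1..p}" "skip j ` {p+1..2*p} \<subseteq> {p+1..2*p}"
      using assms(2) by (auto simp: skip_def)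
    moreover have "2 \<le> card {i\<in>{1..p}. \<pi> i = BN}" "1 \<le> card {i\<in>{p+1..2*p}. \<pi> i = BO}"
      using assms(1) by (simp_all add: E1_cond_def)
    ultimately show ?thesis using that by blast
  next
    case False
    then have "2 \<le> card {i\<in>{1..p} - {p}. \<pi> i = BN}" "1 \<le> card {i\<in>{p+1..2*p} - {2*p}. \<pi> i = BO}"
      unfolding left_fragile_def de_Morgan_disj not_less by blast+
    moreover have "skip j ` ({1..p} - {p}) \<subseteq> {1..p}" "skip j ` ({p+1..2*p} - {2*p}) \<subseteq> {p+1..2*p}"
      by (auto simp: skip_def)
    ultimately show ?thesis using that by blast
  qed
  show "2 \<le> card {i\<in>{1..p}. insert_at \<pi> j BO i = BN}"
    using le_card_insert_at[OF A(1) finite_atLeastAtMost A(2)] .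
  show "1 \<le> card {i\<in>{p+1..2*p}. insert_at \<pi> j BO i = BO}"
    using le_card_insert_at[OF B(1) finite_atLeastAtMost B(2)] .
qed

lemma right_windows_insert_at:
  assumes "E1_cond N p \<pi>" "2 * p \<le> N" "right_fragile N p \<pi> \<Longrightarrow> j \<le> N - 2 * p + 1"
  shows "2 \<le> card {i\<in>{N-p+2..Suc N}. insert_at \<pi> j BO i = SN}"
    and "1 \<le> card {i\<in>{N-2*p+2..N-p+1}. insert_at \<pi> j BO i = SO}"
proof -
  obtain A B where A: "2 \<le> card {i\<in>A. \<pi> i = SN}" "skip j ` A \<subseteq> {N-p+2..Suc N}"
    and B: "1 \<le> card {i\<in>B. \<pi> i = SO}" "skip j ` B \<subseteq> {N-2*p+2..N-p+1}"
  proof (cases "right_fragile N p \<pi>")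
    case True
    then have "skip j ` {N-p+1..N} \<subseteq> {N-p+2..Suc N}" "skip j ` {N-2*p+1..N-p} \<subseteq> {N-2*p+2..N-p+1}"
      using assms(2,3) by (auto simp: skip_def)
    moreover have "2 \<le> card {i\<in>{N-p+1..N}. \<pi> i = SN}" "1 \<le> card {i\<in>{N-2*p+1..N-p}. \<pi> i = SO}"
      using assms(1) by (simp_all add: E1_cond_def)
    ultimately show ?thesis using that by blast
  next
    case False
    then have "2 \<le> card {i\<in>{N-p+1..N} - {N-p+1}. \<pi> i = SN}"
      "1 \<le> card {i\<in>{N-2*p+1..N-p} - {N-2*p+1}. \<pi> i = SO}"
      unfolding right_fragile_def de_Morgan_disj not_less by blast+
    moreover have "skip j ` ({N-p+1..N} - {N-p+1}) \<subseteq> {N-p+2..Suc N}"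
      "skip j ` ({N-2*p+1..N-p} - {N-2*p+1}) \<subseteq> {N-2*p+2..N-p+1}"
      using assms(2) by (auto simp: skip_def)
    ultimately show ?thesis using that by blast
  qed
  show "2 \<le> card {i\<in>{N-p+2..Suc N}. insert_at \<pi> j BO i = SN}"
    using le_card_insert_at[OF A(1) finite_atLeastAtMost A(2)] .
  show "1 \<le> card {i\<in>{N-2*p+2..N-p+1}. insert_at \<pi> j BO i = SO}"
    using le_card_insert_at[OF B(1) finite_atLeastAtMost B(2)] .
qed

lemma E1_cond_insert_at:
  assumes "E1_cond N p \<pi>" "2 * p \<le> N"
    and "left_fragile p \<pi> \<Longrightarrow> 2 * p < j" "right_fragile N p \<pi> \<Longrightarrow> j \<le> N - 2 * p + 1"
  shows "E1_cond (Suc N) p (insert_at \<pi> j BO)"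
proof -
  have "Suc N - p + 1 = N - p + 2" "Suc N - 2 * p + 1 = N - 2 * p + 2" "Suc N - p = N - p + 1"
    using assms(2) by auto
  then show ?thesis
    using left_windows_insert_at[OF assms(1,3)] right_windows_insert_at[OF assms(1,2,4)]
    unfolding E1_cond_def by simp
qed

lemma card_insert_positions_E1:
  assumes "\<pi> \<in> E1 n m c" "4 * pp n \<le> NN n m c"
  defines "N \<equiv> NN n m c" and "p \<equiv> pp n"
  shows "Suc N \<le> card {j\<in>{1..Suc N}. insert_at \<pi> j BO \<in> E1 n (Suc m) c}
                  + (if left_fragile p \<pi> then 2 * p else 0)
                  + (if right_fragile N p \<pi> then 2 * p else 0)"
proof -
  define B where "B = (if left_fragile p \<pi> then {1..2*p} else {})
                    \<union> (if right_fragile N p \<pi> then {N-2*p+2..Suc N} else {})"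
  let ?G = "{j\<in>{1..Suc N}. insert_at \<pi> j BO \<in> E1 n (Suc m) c}"
  have "{1..Suc N} - B \<subseteq> ?G"
  proof
    fix j assume "j \<in> {1..Suc N} - B"
    then have j: "1 \<le> j" "j \<le> Suc N" "left_fragile p \<pi> \<Longrightarrow> 2 * p < j"
      "right_fragile N p \<pi> \<Longrightarrow> j \<le> N - 2 * p + 1"
      unfolding B_def by (auto split: if_splits)
    have "E1_cond (Suc N) p (insert_at \<pi> j BO)"
      using assms(1,2) j(3,4) by (intro E1_cond_insert_at) (simp_all add: E1_iff N_def p_def)
    moreover have "insert_at \<pi> j BO \<in> PiSet n (Suc m) c"
      using assms(1) j(1,2) by (intro insert_at_PiSet) (simp_all add: E1_iff N_def)
    ultimately show "j \<in> ?G" using j(1,2) by (simp add: E1_iff NN_Suc N_def p_def)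
  qed
  then have "card ({1..Suc N} - B) \<le> card ?G"
    by (rule card_mono[rotated]) simp
  moreover have "card {1..Suc N} - card B \<le> card ({1..Suc N} - B)"
    by (rule diff_card_le_card_Diff) (simp add: B_def)
  moreover have "card B \<le> card (if left_fragile p \<pi> then {1..2*p} else {})
                           + card (if right_fragile N p \<pi> then {N-2*p+2..Suc N} else {})"
    unfolding B_def by (rule card_Un_le)
  ultimately show ?thesis using assms(2) by (simp add: N_def p_def split: if_splits)
qed

lemma card_E1_fragile_window_le:
  assumes "4 * pp n \<le> NN n m c" "k0 \<in> V"
    and "V \<in> {{1..pp n}, {pp n+1..2*pp n}, {NN n m c-pp n+1..NN n m c},
              {NN n m c-2*pp n+1..NN n m c-pp n}}"
    and "\<And>\<pi>. \<pi> \<in> E1 n m c \<Longrightarrow> r \<le> card {i\<in>V. \<pi> i = X}"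
  shows "pp n * card {\<pi>\<in>E1 n m c. card {i\<in>V - {k0}. \<pi> i = X} < r} \<le> r * card (E1 n m c)"
proof -
  have "finite V" "card V = pp n" using assms(1,3) by auto
  moreover have "\<pi> \<circ> Transposition.transpose k k0 \<in> E1 n m c" if "k \<in> V" "\<pi> \<in> E1 n m c" for k \<pi>
    using E1_transpose[OF that(2) assms(1) that(1) assms(2,3)] .
  ultimately show ?thesis
    using card_mult_card_fragile_le[OF finite_E1 \<open>finite V\<close> assms(2), where r = r and X = X]
      assms(4)
    by simp
qed

lemma card_E1_fragile_le:
  assumes "1 \<le> pp n" "4 * pp n \<le> NN n m c"
  shows "pp n * card {\<pi>\<in>E1 n m c. left_fragile (pp n) \<pi>} \<le> 3 * card (E1 n m c)"
    and "pp n * card {\<pi>\<in>E1 n m c. right_fragile (NN n m c) (pp n) \<pi>} \<le> 3 * card (E1 n m c)"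
proof -
  let ?S = "E1 n m c" and ?N = "NN n m c" and ?p = "pp n"
  let ?A1 = "{\<pi>\<in>?S. card {i\<in>{1..?p} - {?p}. \<pi> i = BN} < 2}"
    and ?A2 = "{\<pi>\<in>?S. card {i\<in>{?p+1..2*?p} - {2*?p}. \<pi> i = BO} < 1}"
    and ?A3 = "{\<pi>\<in>?S. card {i\<in>{?N-?p+1..?N} - {?N-?p+1}. \<pi> i = SN} < 2}"
    and ?A4 = "{\<pi>\<in>?S. card {i\<in>{?N-2*?p+1..?N-?p} - {?N-2*?p+1}. \<pi> i = SO} < 1}"
  have bounds: "?p * card ?A1 \<le> 2 * card ?S" "?p * card ?A2 \<le> 1 * card ?S"
    "?p * card ?A3 \<le> 2 * card ?S" "?p * card ?A4 \<le> 1 * card ?S"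
    using assms by (intro card_E1_fragile_window_le; force simp: E1_iff E1_cond_def)+
  have union: "?p * card (A \<union> B) \<le> ?p * card A + ?p * card B" for A B :: "(nat \<Rightarrow> role) set"
    using mult_le_mono2[OF card_Un_le[of A B], of ?p] by (simp add: add_mult_distrib2)
  have "{\<pi>\<in>?S. left_fragile ?p \<pi>} = ?A1 \<union> ?A2" "{\<pi>\<in>?S. right_fragile ?N ?p \<pi>} = ?A3 \<union> ?A4"
    unfolding left_fragile_def right_fragile_def by auto
  then show "?p * card {\<pi>\<in>?S. left_fragile ?p \<pi>} \<le> 3 * card ?S"
    and "?p * card {\<pi>\<in>?S. right_fragile ?N ?p \<pi>} \<le> 3 * card ?S"
    using bounds union[of ?A1 ?A2] union[of ?A3 ?A4] by simp_all
qed

lemma sum_card_insert_at_le: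
  assumes "finite S" "T \<subseteq> PiSet n (Suc m) c"
  shows "(\<Sum>\<pi>\<in>S. card {j\<in>{1..Suc (NN n m c)}. insert_at \<pi> j BO \<in> T}) \<le> card T * Suc m"
proof -
  let ?J = "{1..Suc (NN n m c)}"
  have "finite T" using finite_PiSet assms(2) by (rule finite_subset[rotated])
  then have "(\<Sum>\<pi>\<in>S. card {j\<in>?J. insert_at \<pi> j BO \<in> T})
      = (\<Sum>\<sigma>\<in>T. card {j\<in>?J. \<sigma> j = BO \<and> delete_at \<sigma> j \<in> S})"
    using assms(1) by (intro sum_card_insert_at_eq) auto
  also have "\<dots> \<le> (\<Sum>\<sigma>\<in>T. card {j\<in>?J. \<sigma> j = BO})"
    by (intro sum_mono card_mono) auto
  also have "\<dots> = (\<Sum>\<sigma>\<in>T. Suc m)"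
    using assms(2) card_PiSet_role[of _ n "Suc m" c BO] by (intro sum.cong) (auto simp: NN_Suc)
  finally show ?thesis by simp
qed

lemma card_E1_step:
  assumes "12 \<le> c" "1 \<le> pp n" "4 * pp n \<le> NN n m c"
  shows "card (E1 n m c) * (Suc (NN n m c) - c) \<le> card (E1 n (Suc m) c) * Suc m"
proof -
  define N p where "N = NN n m c" and "p = pp n"
  let ?S = "E1 n m c" and ?T = "E1 n (Suc m) c"
  let ?G = "\<lambda>\<pi>. {j\<in>{1..Suc N}. insert_at \<pi> j BO \<in> ?T}"
  have "Suc N * card ?S = (\<Sum>\<pi>\<in>?S. Suc N)" by simp
  also have "\<dots> \<le> (\<Sum>\<pi>\<in>?S. card (?G \<pi>) + (if left_fragile p \<pi> then 2 * p else 0)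
                                    + (if right_fragile N p \<pi> then 2 * p else 0))"
    using card_insert_positions_E1[OF _ assms(3)] unfolding N_def p_def by (intro sum_mono)
  also have "\<dots> = (\<Sum>\<pi>\<in>?S. card (?G \<pi>)) + 2 * (p * card {\<pi>\<in>?S. left_fragile p \<pi>})
                                          + 2 * (p * card {\<pi>\<in>?S. right_fragile N p \<pi>})"
    using finite_E1 by (simp add: sum.distrib sum.If_cases Int_def)
  also have "\<dots> \<le> card ?T * Suc m + 12 * card ?S"
    using sum_card_insert_at_le[OF finite_E1[of n m c] E1_subset_PiSet[of n "Suc m" c]]
      card_E1_fragile_le[OF assms(2,3)]
    unfolding N_def p_def by linarith
  finally have main: "Suc N * card ?S \<le> card ?T * Suc m + 12 * card ?S" .
  have "card ?S * (Suc N - c) \<le> card ?S * (Suc N - 12)"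
    using assms(1) by (intro mult_le_mono2) simp
  also have "\<dots> = Suc N * card ?S - 12 * card ?S" by (simp add: diff_mult_distrib2 mult.commute)
  also have "\<dots> \<le> card ?T * Suc m" using main by linarith
  finally show ?thesis unfolding N_def .
qed

section \<open>Maps with early SN entries\<close>

definition SN_upto :: "nat \<Rightarrow> nat \<Rightarrow> nat \<Rightarrow> nat \<Rightarrow> (nat \<Rightarrow> role) set" where
  "SN_upto L n m c = {\<pi> \<in> PiSet n m c. \<forall>i\<in>{1..NN n m c}. \<pi> i = SN \<longrightarrow> i \<le> L}"

lemma finite_SN_upto: "finite (SN_upto L n m c)"
  using finite_PiSet by (rule finite_subset[rotated]) (auto simp: SN_upto_def)

lemma card_SN_upto_mult_le:
  assumes "L \<le> NN n m c"
  shows "card (SN_upto L n m c) * ((NN n m c - L) * c) \<le> card (PiSet n m c) * L"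
proof -
  define N where "N = NN n m c"
  let ?S = "PiSet n m c" and ?R = "{L+1..N}"
  let ?X = "\<lambda>j. {\<pi>\<in>?S. card {i\<in>?R. \<pi> i = SN} = j}"
  have "SN_upto L n m c \<subseteq> ?X 0" by (auto simp: SN_upto_def N_def)
  then have "card (SN_upto L n m c) * ((N - L) * c) \<le> card (?X 0) * ((N - L) * c)"
    by (intro mult_le_mono1 card_mono) (simp_all add: finite_PiSet)
  also have "\<dots> = card (?X 0) * ((card ?R - 0) * (c - 0))" by simp
  also have "\<dots> \<le> card (?X (Suc 0)) * (Suc 0 * card ({1..N} - ?R))"
    using finite_PiSet
  proof (rule hypergeometric_ratio_le)
    fix \<pi> assume "\<pi> \<in> ?S"
    then show "card {i\<in>{1..N}. \<pi> i = SN} = c"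
      using card_PiSet_role[of \<pi> n m c SN] by (simp add: N_def)
  qed (auto simp: N_def intro: PiSet_transpose)
  also have "\<dots> \<le> card ?S * L"
  proof (rule mult_le_mono)
    show "card (?X (Suc 0)) \<le> card ?S" by (rule card_mono[OF finite_PiSet]) auto
    have "{1..N} - ?R = {1..L}" using assms by (auto simp: N_def)
    then show "Suc 0 * card ({1..N} - ?R) \<le> L" by simp
  qed
  finally show ?thesis unfolding N_def .
qed

lemma delete_at_SN_upto:
  assumes "\<sigma> \<in> SN_upto L n (Suc m) c" "j \<in> {1..Suc (NN n m c)}" "\<sigma> j = BO"
  shows "delete_at \<sigma> j \<in> SN_upto L n m c"
proof -
  have SN: "i \<le> L" if "\<sigma> i = SN" "i \<in> {1..Suc (NN n m c)}" for i
    using assms(1) that by (auto simp: SN_upto_def NN_Suc)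
  have "i \<le> L" if "i \<in> {1..NN n m c}" "delete_at \<sigma> j i = SN" for i
    using that SN[of i] SN[of "Suc i"] by (auto simp: delete_at_def split: if_splits)
  moreover have "delete_at \<sigma> j \<in> PiSet n m c"
    using assms by (intro delete_at_PiSet) (auto simp: SN_upto_def)
  ultimately show ?thesis by (simp add: SN_upto_def)
qed

lemma sum_card_insert_at_SN_upto:
  "(\<Sum>\<pi>\<in>SN_upto L n m c. card {j\<in>{1..Suc (NN n m c)}. insert_at \<pi> j BO \<in> SN_upto L n (Suc m) c})
     = card (SN_upto L n (Suc m) c) * Suc m"
proof -
  let ?J = "{1..Suc (NN n m c)}" and ?S = "SN_upto L n m c" and ?T = "SN_upto L n (Suc m) c"
  have "(\<Sum>\<pi>\<in>?S. card {j\<in>?J. insert_at \<pi> j BO \<in> ?T})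
      = (\<Sum>\<sigma>\<in>?T. card {j\<in>?J. \<sigma> j = BO \<and> delete_at \<sigma> j \<in> ?S})"
    by (rule sum_card_insert_at_eq) (simp_all add: finite_SN_upto)
  also have "\<dots> = (\<Sum>\<sigma>\<in>?T. card {j\<in>?J. \<sigma> j = BO})"
    using delete_at_SN_upto by (intro sum.cong) (auto intro!: arg_cong[where f = card])
  also have "\<dots> = (\<Sum>\<sigma>\<in>?T. Suc m)"
    using card_PiSet_role[of _ n "Suc m" c BO] by (intro sum.cong) (auto simp: SN_upto_def NN_Suc)
  finally show ?thesis by simp
qed

lemma card_insert_positions_SN_upto:
  assumes "\<pi> \<in> SN_upto L n m c" "L \<le> NN n m c"
  shows "card {j\<in>{1..Suc (NN n m c)}. insert_at \<pi> j BO \<in> SN_upto L n (Suc m) c}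
           + (if \<pi> L = SN then L else 0) \<le> Suc (NN n m c)"
proof -
  let ?J = "{1..Suc (NN n m c)}"
  let ?G = "{j\<in>?J. insert_at \<pi> j BO \<in> SN_upto L n (Suc m) c}"
  have "j \<notin> ?G" if "\<pi> L = SN" "j \<le> L" for j
  proof
    assume "j \<in> ?G"
    moreover have "insert_at \<pi> j BO (Suc L) = SN" using that by (simp add: insert_at_def)
    ultimately show False using assms(2) by (auto simp: SN_upto_def NN_Suc)
  qed
  then have "?G \<subseteq> ?J - (if \<pi> L = SN then {1..L} else {})" by auto
  then have "card ?G \<le> card (?J - (if \<pi> L = SN then {1..L} else {}))"
    by (rule card_mono[rotated]) simp
  then show ?thesis using assms(2) by (simp add: card_Diff_subset split: if_splits)
qed

lemma card_SN_upto_SN_at: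
  assumes "1 \<le> L" "L \<le> NN n m c"
  shows "c * card (SN_upto L n m c) = L * card {\<pi>\<in>SN_upto L n m c. \<pi> L = SN}"
proof -
  let ?S = "SN_upto L n m c"
  have "(\<Sum>\<pi>\<in>?S. card {k\<in>{1..L}. \<pi> k = SN}) = card {\<pi>\<in>?S. \<pi> L = SN} * card {1..L}"
  proof (rule sum_card_eq_by_transpose_symmetry[OF finite_SN_upto])
    fix k \<pi> assume "k \<in> {1..L}" "\<pi> \<in> ?S"
    then show "\<pi> \<circ> Transposition.transpose k L \<in> ?S"
      using assms by (auto simp: SN_upto_def PiSet_transpose Transposition.transpose_def)
  qed (use assms in auto)
  moreover have "(\<Sum>\<pi>\<in>?S. card {k\<in>{1..L}. \<pi> k = SN}) = (\<Sum>\<pi>\<in>?S. c)"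
  proof (rule sum.cong)
    fix \<pi> assume "\<pi> \<in> ?S"
    then have "{k\<in>{1..L}. \<pi> k = SN} = {k\<in>{1..NN n m c}. \<pi> k = SN}"
      using assms by (auto simp: SN_upto_def)
    then show "card {k\<in>{1..L}. \<pi> k = SN} = c"
      using \<open>\<pi> \<in> ?S\<close> card_PiSet_role[of \<pi> n m c SN] by (simp add: SN_upto_def)
  qed simp
  ultimately show ?thesis by (simp add: mult.commute)
qed

lemma card_SN_upto_step:
  assumes "1 \<le> L" "L \<le> NN n m c"
  shows "card (SN_upto L n (Suc m) c) * Suc m \<le> card (SN_upto L n m c) * (Suc (NN n m c) - c)"
proof -
  let ?S = "SN_upto L n m c" and ?T = "SN_upto L n (Suc m) c"
  let ?G = "\<lambda>\<pi>. {j\<in>{1..Suc (NN n m c)}. insert_at \<pi> j BO \<in> ?T}"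
  have "card ?T * Suc m + c * card ?S = (\<Sum>\<pi>\<in>?S. card (?G \<pi>) + (if \<pi> L = SN then L else 0))"
    unfolding sum_card_insert_at_SN_upto[symmetric] card_SN_upto_SN_at[OF assms]
    using finite_SN_upto by (simp add: sum.distrib sum.If_cases Int_def)
  also have "\<dots> \<le> (\<Sum>\<pi>\<in>?S. Suc (NN n m c))"
    using card_insert_positions_SN_upto[OF _ assms(2)] by (rule sum_mono)
  finally show ?thesis by (simp add: diff_mult_distrib2 mult.commute)
qed

section \<open>Comparison of E1 and E2\<close>

lemma pp_bounds: "n \<le> 10 * pp n" "10 * pp n \<le> n + 9"
proof -
  have "real n / 10 \<le> of_int \<lceil>real n / 10\<rceil>" "of_int \<lceil>real n / 10\<rceil> < real n / 10 + 1"
    by linarith+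
  then have "int n \<le> 10 * \<lceil>real n / 10\<rceil>" "10 * \<lceil>real n / 10\<rceil> < int n + 10"
    by linarith+
  then show "n \<le> 10 * pp n" "10 * pp n \<le> n + 9" unfolding pp_def by linarith+
qed

lemma card_PiSet_sparse_window_le:
  assumes "R \<subseteq> {1..NN n m c}" "R \<noteq> {}"
    and total: "\<And>\<pi>. \<pi> \<in> PiSet n m c \<Longrightarrow> card {i\<in>{1..NN n m c}. \<pi> i = x} = k"
    and large: "200 * NN n m c \<le> (card R - 1) * (k - 1)"
  shows "50 * card {\<pi>\<in>PiSet n m c. card {i\<in>R. \<pi> i = x} < 2} \<le> card (PiSet n m c)"
proof -
  let ?S = "PiSet n m c" and ?N = "NN n m c"
  let ?X = "\<lambda>j. {\<pi>\<in>?S. card {i\<in>R. \<pi> i = x} = j}"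
  have "0 < ?N" using assms(1,2) by auto
  then have pos: "0 < (card R - 1) * (k - 1)" using large by linarith
  have "card ({1..?N} - R) \<le> ?N" using card_mono[of "{1..?N}" "{1..?N} - R"] by auto
  have rare: "100 * card (?X j) \<le> card ?S" if "j \<le> 1" for j
  proof -
    have "card (?X j) * ((card R - 1) * (k - 1)) \<le> card (?X j) * ((card R - j) * (k - j))"
      using that by (intro mult_le_mono2 mult_le_mono) auto
    also have "\<dots> \<le> card (?X (Suc j)) * (Suc j * card ({1..?N} - R))"
      using finite_PiSet
      by (rule hypergeometric_ratio_le) (use assms(1) total in \<open>auto intro: PiSet_transpose\<close>)
    also have "\<dots> \<le> card ?S * (2 * ?N)"
      using that \<open>card ({1..?N} - R) \<le> ?N\<close>
      by (intro mult_le_mono card_mono) (auto simp: finite_PiSet)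
    finally have "100 * (card (?X j) * ((card R - 1) * (k - 1))) \<le> 100 * (card ?S * (2 * ?N))"
      by (rule mult_le_mono2)
    then have "100 * card (?X j) * ((card R - 1) * (k - 1)) \<le> card ?S * (200 * ?N)"
      by (simp add: mult_ac)
    also have "\<dots> \<le> card ?S * ((card R - 1) * (k - 1))"
      using large by (rule mult_le_mono2)
    finally show ?thesis using pos by simp
  qed
  have "{\<pi>\<in>?S. card {i\<in>R. \<pi> i = x} < 2} = ?X 0 \<union> ?X 1" by auto
  then show ?thesis using rare[of 0] rare[of 1] card_Un_le[of "?X 0" "?X 1"] by simp
qed

lemma card_PiSet_sparse_E1_window_le:
  assumes "20000 \<le> c" "c \<le> n" "c \<le> m" "m \<le> 3 * n + 2 * c"
    and "W \<in> {{1..pp n}, {pp n+1..2*pp n}, {NN n m c-pp n+1..NN n m c},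
              {NN n m c-2*pp n+1..NN n m c-pp n}}"
  shows "50 * card {\<pi>\<in>PiSet n m c. card {i\<in>W. \<pi> i = x} < 2} \<le> card (PiSet n m c)"
proof (rule card_PiSet_sparse_window_le[where k = "case x of BO \<Rightarrow> m | BN \<Rightarrow> c | SO \<Rightarrow> n | SN \<Rightarrow> c"])
  define N p where "N = NN n m c" and "p = pp n"
  have p: "2000 \<le> p" "4 * p \<le> N" "N \<le> 80 * p"
    using pp_bounds[of n] assms by (auto simp: N_def p_def NN_def)
  show "W \<subseteq> {1..NN n m c}" "W \<noteq> {}" using assms(5) p unfolding N_def p_def by auto
  have "card W = p" "20000 \<le> (case x of BO \<Rightarrow> m | BN \<Rightarrow> c | SO \<Rightarrow> n | SN \<Rightarrow> c)"
    using assms p unfolding N_def p_def by (auto split: role.split)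
  moreover have "200 * N \<le> (p - 1) * (k - 1)" if "20000 \<le> k" for k
  proof -
    have "(p - 1) * 19999 \<le> (p - 1) * (k - 1)" using that by (intro mult_le_mono2) simp
    moreover have "(p - 1) * 19999 = 19999 * p - 19999" by (simp add: diff_mult_distrib)
    ultimately show ?thesis using p by linarith
  qed
  ultimately show "200 * NN n m c \<le> (card W - 1) * ((case x of BO \<Rightarrow> m | BN \<Rightarrow> c | SO \<Rightarrow> n | SN \<Rightarrow> c) - 1)"
    unfolding N_def by simp
qed (rule card_PiSet_role)

lemma card_PiSet_le_twice_card_E1:
  assumes "20000 \<le> c" "c \<le> n" "c \<le> m" "m \<le> 3 * n + 2 * c"
  shows "card (PiSet n m c) \<le> 2 * card (E1 n m c)"
proof -
  let ?S = "PiSet n m c" and ?N = "NN n m c" and ?p = "pp n"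
  let ?A1 = "{\<pi>\<in>?S. card {i\<in>{1..?p}. \<pi> i = BN} < 2}"
    and ?A2 = "{\<pi>\<in>?S. card {i\<in>{?p+1..2*?p}. \<pi> i = BO} < 2}"
    and ?A3 = "{\<pi>\<in>?S. card {i\<in>{?N-?p+1..?N}. \<pi> i = SN} < 2}"
    and ?A4 = "{\<pi>\<in>?S. card {i\<in>{?N-2*?p+1..?N-?p}. \<pi> i = SO} < 2}"
  have "?S - E1 n m c \<subseteq> ?A1 \<union> ?A2 \<union> ?A3 \<union> ?A4"
    by (auto simp: E1_iff E1_cond_def)
  then have "card (?S - E1 n m c) \<le> card (?A1 \<union> ?A2 \<union> ?A3 \<union> ?A4)"
    by (rule card_mono[rotated]) (simp add: finite_PiSet)
  also have "\<dots> \<le> card ?A1 + card ?A2 + card ?A3 + card ?A4"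
    using card_Un_le[of "?A1 \<union> ?A2 \<union> ?A3" ?A4] card_Un_le[of "?A1 \<union> ?A2" ?A3] card_Un_le[of ?A1 ?A2]
    by linarith
  finally have "2 * card (?S - E1 n m c) \<le> card ?S"
    using card_PiSet_sparse_E1_window_le[OF assms, of "{1..?p}" BN]
      card_PiSet_sparse_E1_window_le[OF assms, of "{?p+1..2*?p}" BO]
      card_PiSet_sparse_E1_window_le[OF assms, of "{?N-?p+1..?N}" SN]
      card_PiSet_sparse_E1_window_le[OF assms, of "{?N-2*?p+1..?N-?p}" SO] by simp
  then show ?thesis
    using card_Diff_subset[OF finite_E1 E1_subset_PiSet, of n m c]
      card_mono[OF finite_PiSet E1_subset_PiSet, of n m c] by linarith
qed

lemma card_SN_upto_le_card_E1:
  assumes "20000 \<le> c" "c \<le> n" "3 * n + 2 * c \<le> m"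
  shows "card (SN_upto (2 * n + 2 * c) n m c) \<le> card (E1 n m c)"
  using assms(3)
proof (induction m rule: dec_induct)
  case base
  let ?L = "2 * n + 2 * c" and ?m = "3 * n + 2 * c"
  have "card (SN_upto ?L n ?m c) * ((NN n ?m c - ?L) * c) \<le> card (PiSet n ?m c) * ?L"
    by (rule card_SN_upto_mult_le) (simp add: NN_def)
  then have "(card (SN_upto ?L n ?m c) * c) * ?L \<le> card (PiSet n ?m c) * ?L"
    by (simp add: NN_def mult_ac)
  then have "card (SN_upto ?L n ?m c) * c \<le> card (PiSet n ?m c)"
    using assms(1) by simp
  moreover have "card (SN_upto ?L n ?m c) * 2 \<le> card (SN_upto ?L n ?m c) * c"
    using assms(1) by (intro mult_le_mono2) simp
  moreover have "card (PiSet n ?m c) \<le> 2 * card (E1 n ?m c)"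
    using assms(1,2) by (intro card_PiSet_le_twice_card_E1) auto
  ultimately show ?case by linarith
next
  case (step m)
  let ?L = "2 * n + 2 * c"
  have "card (SN_upto ?L n (Suc m) c) * Suc m \<le> card (SN_upto ?L n m c) * (Suc (NN n m c) - c)"
    using step.hyps assms(1) by (intro card_SN_upto_step) (auto simp: NN_def)
  also have "\<dots> \<le> card (E1 n m c) * (Suc (NN n m c) - c)"
    using step.IH by (rule mult_le_mono1)
  also have "\<dots> \<le> card (E1 n (Suc m) c) * Suc m"
    using pp_bounds[of n] assms step.hyps by (intro card_E1_step) (auto simp: NN_def)
  finally show ?case by (rule mult_right_le_imp_le) simp
qed

lemma card_E2_le_card_E1:
  assumes "20000 \<le> c" "c \<le> n" "n + 2 * c \<le> m"
  shows "card (E2 n m c) \<le> card (E1 n m c)"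
proof (cases "m \<le> 3 * n + 2 * c")
  case True
  have "E2 n m c \<subseteq> PiSet n m c - E1 n m c" by (auto simp: E2_def)
  then have "card (E2 n m c) \<le> card (PiSet n m c - E1 n m c)"
    by (rule card_mono[rotated]) (simp add: finite_PiSet)
  also have "\<dots> = card (PiSet n m c) - card (E1 n m c)"
    by (rule card_Diff_subset[OF finite_E1 E1_subset_PiSet])
  also have "\<dots> \<le> card (E1 n m c)"
    using card_PiSet_le_twice_card_E1[of c n m] assms True by linarith
  finally show ?thesis .
next
  case False
  have "E2 n m c \<subseteq> SN_upto (2 * n + 2 * c) n m c" unfolding E2_def SN_upto_def by fastforce
  then have "card (E2 n m c) \<le> card (SN_upto (2 * n + 2 * c) n m c)"
    by (rule card_mono[rotated]) (rule finite_SN_upto)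
  also have "\<dots> \<le> card (E1 n m c)"
    using assms False by (intro card_SN_upto_le_card_E1) auto
  finally show ?thesis .
qed

theorem lemma3p4:
  fixes n m c :: nat
  assumes "c \<ge> 20000" and "n \<ge> c" and "m \<ge> n + 2 * c"
  shows "measure_pmf.prob (pmf_of_set (PiSet n m c)) (E1 n m c)
         \<ge> measure_pmf.prob (pmf_of_set (PiSet n m c)) (E2 n m c)"
proof -
  have sub: "E1 n m c \<subseteq> PiSet n m c" "E2 n m c \<subseteq> PiSet n m c"
    using E1_subset_PiSet by (auto simp: E2_def)
  show ?thesis
  proof (cases "PiSet n m c = {}")
    case True
    then show ?thesis using sub by simp
  next
    case False
    then show ?thesis
      using sub card_E2_le_card_E1[OF assms] finite_PiSet
      by (simp add: measure_pmf_of_set Int_absorb1 divide_right_mono)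
  qed
qed

end
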